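(* In the risk-aversion-shock setting, suppose $\mathbb P_{(z,\hat z)}(\hat\beta\hat R>0)>0$ for all $z,\hat z\in\mathsf Z$. If there exists $z_{ij}\in\mathsf Z$ such that $\lim_{w\to\infty}c^*(w,z_{ij})/w>0$, then $\bar p_{i1}=\cdots=\bar p_{i,i-1}=0$. In particular, if for every $i>1$ there exists $j$ with $\lim_{w\to\infty}c^*(w,z_{ij})/w>0$, then $\bar P$ is upper triangular.
   Context: Risk-aversion-shock setting. $\mathsf Z=\bar{\mathsf Z}\times\tilde{\mathsf Z}$ with $\bar{\mathsf Z}=\{\bar z_1,\dots,\bar z_N\}$, $\tilde{\mathsf Z}=\{\tilde z_1,\dots,\tilde z_M\}$; $Z_t=(\bar Z_t,\tilde Z_t)$ where $\{\bar Z_t\}$, $\{\tilde Z_t\}$ are independent Markov chains with transition matrices $\bar P=(\bar p_{ij})$ and $\tilde P=(\tilde p_{jk})$, so $\{Z_t\}$ has transition matrix $P=\bar P\otimes\tilde P$. Write $z_{ij}=(\bar z_i,\tilde z_j)$. $\{\epsilon_t\}_{t\ge1}$ i.i.d. with distribution $\pi$, independent of $\{Z_t\}$; for nonnegative measurable $\beta,R,Y$, $\beta_t=\beta(Z_{t-1},Z_t,\epsilon_t)$, $R_t=R(Z_{t-1},Z_t,\epsilon_t)$, $Y_t=Y(Z_{t-1},Z_t,\epsilon_t)$, $\beta_0=1$. Utility: $u(c,z_{ij})=c^{1-\gamma_i}/(1-\gamma_i)$ if $\gamma_i\ne1$ and $\log c$ if $\gamma_i=1$, where $0<\gamma_1<\dots<\gamma_N$;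 $u'(c,z)$ is the derivative in $c$. $\mathbb E_z$: expectation given $Z_0=z$; under $\mathbb E_z$, $\hat Z=Z_1$, $\hat\beta=\beta(z,\hat Z,\epsilon_1)$, $\hat R=R(z,\hat Z,\epsilon_1)$, $\hat Y=Y(z,\hat Z,\epsilon_1)$. $\mathbb P_{(z,\hat z)}(\hat\beta\hat R>0):=\pi\{\epsilon:\beta(z,\hat z,\epsilon)R(z,\hat z,\epsilon)>0\}$. Assumption 2 holds: (a) $\mathbb E_zu'(\hat Y,\hat Z)<\infty$ and $\mathbb E_z\hat\beta\hat Ru'(\hat Y,\hat Z)<\infty$ for all $z$; (b) $r(K(1))<1$ ($r$ = spectral radius), $K_{z\hat z}(\theta)=P(z,\hat z)\int\beta(z,\hat z,\epsilon)R(z,\hat z,\epsilon)^\theta\pi(d\epsilon)$. $S_0=(0,\infty)\times\mathsf Z$; $\mathcal C$: continuous $c:S_0\to\mathbb R_+$, increasing in $w$, $0<c(w,z)\le w$, $\sup_{S_0}|u'(c(w,z),z)-u'(w,z)|<\infty$. $T$: $Tc(w,z)$ is the unique $\xi\in(0,w]$ with $u'(\xi,z)=\max\{\mathbb E_z\hat\beta\hat Ru'(c(\hat R(w-\xi)+\hat Y,\hat Z),\hat Z),u'(w,z)\}$. $c^*$ is the unique fixed point of $T$ in $\mathcal C$ (optimal consumption function). *)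

theory Defs
  imports "HOL-Probability.Probability" "Jordan_Normal_Form.Spectral_Radius"
begin

(* States: z = (i,j) with i < N (index of \<bar>z_i, 0-based) and j < M (index of \<tilde>z_j).
   \<bar>P and \<tilde>P are given as functions nat \<Rightarrow> nat \<Rightarrow> real. *)

definition Zset :: "nat \<Rightarrow> nat \<Rightarrow> (nat \<times> nat) set" where
  "Zset N M = {0..<N} \<times> {0..<M}"

definition stochastic :: "nat \<Rightarrow> (nat \<Rightarrow> nat \<Rightarrow> real) \<Rightarrow> bool" where
  "stochastic n Q \<longleftrightarrow> (\<forall>a<n. \<forall>b<n. Q a b \<ge> 0) \<and> (\<forall>a<n. (\<Sum>b<n. Q a b) = 1)"

definition Pjoint :: "(nat \<Rightarrow> nat \<Rightarrow> real) \<Rightarrow> (nat \<Rightarrow> nat \<Rightarrow> real) \<Rightarrow> nat \<times> nat \<Rightarrow> nat \<times> nat \<Rightarrow> real" where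
  "Pjoint Pb Pt z zh = Pb (fst z) (fst zh) * Pt (snd z) (snd zh)"

definition util :: "(nat \<Rightarrow> real) \<Rightarrow> real \<Rightarrow> nat \<times> nat \<Rightarrow> real" where
  "util \<gamma> c z = (if \<gamma> (fst z) = 1 then ln c else c powr (1 - \<gamma> (fst z)) / (1 - \<gamma> (fst z)))"

definition uprime :: "(nat \<Rightarrow> real) \<Rightarrow> real \<Rightarrow> nat \<times> nat \<Rightarrow> real" where
  "uprime \<gamma> c z = c powr (- \<gamma> (fst z))"

definition uprimeE :: "(nat \<Rightarrow> real) \<Rightarrow> real \<Rightarrow> nat \<times> nat \<Rightarrow> ennreal" where
  "uprimeE \<gamma> c z = (if c > 0 then ennreal (uprime \<gamma> c z) else \<infinity>)"

(* E_z f(\<hat>Z, \<epsilon>_1) for nonnegative f, with \<hat>Z ~ P(z,.) independent of \<epsilon>_1 ~ \<pi> *)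
definition Ez :: "nat \<Rightarrow> nat \<Rightarrow> (nat \<Rightarrow> nat \<Rightarrow> real) \<Rightarrow> (nat \<Rightarrow> nat \<Rightarrow> real) \<Rightarrow> 'e measure
    \<Rightarrow> nat \<times> nat \<Rightarrow> (nat \<times> nat \<Rightarrow> 'e \<Rightarrow> ennreal) \<Rightarrow> ennreal" where
  "Ez N M Pb Pt \<pi> z f = (\<Sum>zh\<in>Zset N M. ennreal (Pjoint Pb Pt z zh) * (\<integral>\<^sup>+ e. f zh e \<partial>\<pi>))"

definition Kentry :: "(nat \<Rightarrow> nat \<Rightarrow> real) \<Rightarrow> (nat \<Rightarrow> nat \<Rightarrow> real) \<Rightarrow> 'e measure
    \<Rightarrow> (nat \<times> nat \<Rightarrow> nat \<times> nat \<Rightarrow> 'e \<Rightarrow> real) \<Rightarrow> (nat \<times> nat \<Rightarrow> nat \<times> nat \<Rightarrow> 'e \<Rightarrow> real)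
    \<Rightarrow> nat \<times> nat \<Rightarrow> nat \<times> nat \<Rightarrow> ennreal" where
  "Kentry Pb Pt \<pi> \<beta> R z zh = ennreal (Pjoint Pb Pt z zh) * (\<integral>\<^sup>+ e. ennreal (\<beta> z zh e * R z zh e) \<partial>\<pi>)"

(* K(1) as an (N*M) x (N*M) complex matrix, state (i,j) encoded as index i*M + j *)
definition Kmat :: "nat \<Rightarrow> nat \<Rightarrow> (nat \<Rightarrow> nat \<Rightarrow> real) \<Rightarrow> (nat \<Rightarrow> nat \<Rightarrow> real) \<Rightarrow> 'e measure
    \<Rightarrow> (nat \<times> nat \<Rightarrow> nat \<times> nat \<Rightarrow> 'e \<Rightarrow> real) \<Rightarrow> (nat \<times> nat \<Rightarrow> nat \<times> nat \<Rightarrow> 'e \<Rightarrow> real) \<Rightarrow> complex mat" where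
  "Kmat N M Pb Pt \<pi> \<beta> R = mat (N * M) (N * M)
     (\<lambda>(a, b). complex_of_real (enn2real (Kentry Pb Pt \<pi> \<beta> R (a div M, a mod M) (b div M, b mod M))))"

definition candC :: "nat \<Rightarrow> nat \<Rightarrow> (nat \<Rightarrow> real) \<Rightarrow> (real \<Rightarrow> nat \<times> nat \<Rightarrow> real) set" where
  "candC N M \<gamma> = {c.
      continuous_on ({0<..} \<times> Zset N M) (\<lambda>p. c (fst p) (snd p)) \<and>
      (\<forall>z\<in>Zset N M. mono_on {0<..} (\<lambda>w. c w z)) \<and>
      (\<forall>w>0. \<forall>z\<in>Zset N M. 0 < c w z \<and> c w z \<le> w) \<and>
      (\<exists>B. \<forall>w>0. \<forall>z\<in>Zset N M. \<bar>uprime \<gamma> (c w z) z - uprime \<gamma> w z\<bar> \<le> B)}"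

definition Top :: "nat \<Rightarrow> nat \<Rightarrow> (nat \<Rightarrow> nat \<Rightarrow> real) \<Rightarrow> (nat \<Rightarrow> nat \<Rightarrow> real) \<Rightarrow> 'e measure
    \<Rightarrow> (nat \<Rightarrow> real)
    \<Rightarrow> (nat \<times> nat \<Rightarrow> nat \<times> nat \<Rightarrow> 'e \<Rightarrow> real) \<Rightarrow> (nat \<times> nat \<Rightarrow> nat \<times> nat \<Rightarrow> 'e \<Rightarrow> real)
    \<Rightarrow> (nat \<times> nat \<Rightarrow> nat \<times> nat \<Rightarrow> 'e \<Rightarrow> real)
    \<Rightarrow> (real \<Rightarrow> nat \<times> nat \<Rightarrow> real) \<Rightarrow> real \<Rightarrow> nat \<times> nat \<Rightarrow> real" where
  "Top N M Pb Pt \<pi> \<gamma> \<beta> R Y c w z = (THE \<xi>. 0 < \<xi> \<and> \<xi> \<le> w \<and>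
      uprimeE \<gamma> \<xi> z = max
        (Ez N M Pb Pt \<pi> z (\<lambda>zh e. ennreal (\<beta> z zh e * R z zh e) *
             uprimeE \<gamma> (c (R z zh e * (w - \<xi>) + Y z zh e) zh) zh))
        (uprimeE \<gamma> w z))"

end

theory Submission
  imports Defs "HOL-Real_Asymp.Real_Asymp"
begin

text \<open>
  At every wealth level w > 0 the optimal consumption c = c*(w, z_ij) satisfies the Euler inequality
  u'(c, z_ij) >= E_z beta R u'(c*(R (w - c) + Y, Z), Z). Suppose the chain can move from i to some k < i.
  With positive probability beta R is bounded below while R and Y are bounded above, so next-period
  wealth is O(w) and the right-hand side is at least of order w^(-gamma_k). A positive limit of
  c*(w, z_ij) / w makes the left-hand side of order w^(-gamma_i), which is eventually smaller
  because gamma_k < gamma_i.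
\<close>

lemma ex1_powr_eq_max:
  fixes f :: "real \<Rightarrow> real"
  assumes g: "0 < g" and w: "0 < w"
    and cont: "continuous_on {0<..w} f" and mono: "mono_on {0<..w} f"
  shows "\<exists>!\<xi>. 0 < \<xi> \<and> \<xi> \<le> w \<and> \<xi> powr -g = max (f \<xi>) (w powr -g)"
proof (rule ex_ex1I)
  define V where "V = \<bar>f w\<bar> + w powr -g + 1"
  have V: "0 < V" by (simp add: V_def add_nonneg_pos)
  define a where "a = min w (V powr (-1/g))"
  have a: "0 < a" "a \<le> w" using w V by (auto simp: a_def)
  have "V = (V powr (-1/g)) powr -g" using g V by (simp add: powr_powr)
  also have "\<dots> \<le> a powr -g" using g a by (intro powr_mono2') (auto simp: a_def)
  finally have aV: "V \<le> a powr -g" .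
  define \<psi> where "\<psi> \<xi> = \<xi> powr -g - max (f \<xi>) (w powr -g)" for \<xi>
  have "f a \<le> f w" by (rule mono_onD[OF mono]) (use a w in auto)
  then have "max (f a) (w powr -g) \<le> V"
    using abs_ge_self[of "f w"] powr_ge_zero[of w "-g"] unfolding V_def max_def by argo
  then have "0 \<le> \<psi> a" using aV by (simp add: \<psi>_def)
  moreover have "\<psi> w \<le> 0" by (simp add: \<psi>_def)
  moreover have "continuous_on {a..w} \<psi>"
    unfolding \<psi>_def using a
    by (intro continuous_intros continuous_on_subset[OF cont]) auto
  ultimately obtain \<xi> where "a \<le> \<xi>" "\<xi> \<le> w" "\<psi> \<xi> = 0"
    using IVT2'[of \<psi> w 0 a] a by auto
  then show "\<exists>\<xi>. 0 < \<xi> \<and> \<xi> \<le> w \<and> \<xi> powr -g = max (f \<xi>) (w powr -g)"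
    using a by (intro exI[of _ \<xi>]) (auto simp: \<psi>_def)
next
  have no_smaller_root: False
    if "0 < \<xi>" "\<xi> < \<eta>" "\<eta> \<le> w"
      and "\<xi> powr -g = max (f \<xi>) (w powr -g)" "\<eta> powr -g = max (f \<eta>) (w powr -g)" for \<xi> \<eta>
  proof -
    have "\<eta> powr -g < \<xi> powr -g" using that g by (intro powr_less_mono2_neg) auto
    moreover have "f \<xi> \<le> f \<eta>" by (rule mono_onD[OF mono]) (use that in auto)
    ultimately show False using that by linarith
  qed
  fix \<xi> \<eta>
  assume "0 < \<xi> \<and> \<xi> \<le> w \<and> \<xi> powr -g = max (f \<xi>) (w powr -g)"
    and "0 < \<eta> \<and> \<eta> \<le> w \<and> \<eta> powr -g = max (f \<eta>) (w powr -g)"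
  then show "\<xi> = \<eta>"
    by (metis linorder_neqE_linordered_idom no_smaller_root)
qed

lemma emeasure_pos_truncation:
  fixes f g :: "'a \<Rightarrow> real"
  assumes [measurable]: "f \<in> borel_measurable M" "g \<in> borel_measurable M"
    and pos: "0 < emeasure M {x \<in> space M. 0 < f x}"
  shows "\<exists>a>0. 0 < emeasure M {x \<in> space M. 1 \<le> a * f x \<and> g x \<le> a}"
proof (rule ccontr)
  define S where "S n = {x \<in> space M. 1 \<le> real (Suc n) * f x \<and> g x \<le> real (Suc n)}" for n
  have S_sets: "S n \<in> sets M" for n unfolding S_def by measurable
  assume "\<not> ?thesis"
  then have "\<not> 0 < emeasure M (S n)" for n
    unfolding S_def using of_nat_0_less_iff zero_less_Suc by blast
  then have "emeasure M (S n) = 0" for n by simp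
  then have "emeasure M (\<Union>n. S n) = 0" using S_sets by (intro emeasure_UN_eq_0) auto
  moreover have "{x \<in> space M. 0 < f x} \<subseteq> (\<Union>n. S n)"
  proof
    fix x assume x: "x \<in> {x \<in> space M. 0 < f x}"
    obtain n1 :: nat where n1: "1 < real n1 * f x" using ex_less_of_nat_mult x by auto
    obtain n2 :: nat where n2: "g x \<le> real n2" using real_arch_simple by blast
    have "real n1 * f x \<le> real (Suc (n1 + n2)) * f x" using x by (intro mult_right_mono) auto
    with n1 have "1 \<le> real (Suc (n1 + n2)) * f x" by linarith
    moreover have "g x \<le> real (Suc (n1 + n2))" using n2 by simp
    ultimately have "x \<in> S (n1 + n2)" using x by (simp add: S_def)
    then show "x \<in> (\<Union>n. S n)" by blast
  qed
  then have "emeasure M {x \<in> space M. 0 < f x} \<le> emeasure M (\<Union>n. S n)"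
    using S_sets by (intro emeasure_mono) auto
  ultimately show False using pos by simp
qed

lemma stochastic_row_pos:
  assumes "stochastic n Q" "a < n"
  shows "\<exists>b<n. 0 < Q a b"
proof (rule ccontr)
  assume "\<not> ?thesis"
  then have "\<forall>b<n. Q a b \<le> 0" by (meson not_le)
  then have "(\<Sum>b<n. Q a b) \<le> 0" by (intro sum_nonpos) simp
  with assms show False by (simp add: stochastic_def)
qed

lemma uprimeE_pos: "0 < x \<Longrightarrow> uprimeE \<gamma> x z = ennreal (x powr - \<gamma> (fst z))"
  by (simp add: uprimeE_def uprime_def)

lemma Ez_term_le:
  assumes "zh \<in> Zset N M"
  shows "ennreal (Pjoint Pb Pt z zh) * (\<integral>\<^sup>+e. f zh e \<partial>\<pi>) \<le> Ez N M Pb Pt \<pi> z f"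
  unfolding Ez_def using assms by (intro member_le_sum) (auto simp: Zset_def)

lemma nn_integral_finite_of_Ez:
  assumes "Ez N M Pb Pt \<pi> z f < \<infinity>" "zh \<in> Zset N M" "0 < Pjoint Pb Pt z zh"
  shows "(\<integral>\<^sup>+e. f zh e \<partial>\<pi>) < \<infinity>"
proof -
  have "ennreal (Pjoint Pb Pt z zh) * (\<integral>\<^sup>+e. f zh e \<partial>\<pi>) < \<infinity>"
    using Ez_term_le[OF assms(2)] assms(1) by (rule le_less_trans)
  with assms(3) show ?thesis by (auto simp: ennreal_mult_less_top)
qed

lemma Ez_finite:
  assumes "\<And>zh. zh \<in> Zset N M \<Longrightarrow> 0 < Pjoint Pb Pt z zh \<Longrightarrow> (\<integral>\<^sup>+e. f zh e \<partial>\<pi>) < \<infinity>"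
  shows "Ez N M Pb Pt \<pi> z f < \<infinity>"
proof -
  have "ennreal (Pjoint Pb Pt z zh) * (\<integral>\<^sup>+e. f zh e \<partial>\<pi>) < \<infinity>" if "zh \<in> Zset N M" for zh
    using assms[OF that] by (cases "0 < Pjoint Pb Pt z zh") (auto simp: ennreal_mult_less_top ennreal_neg)
  then show ?thesis unfolding Ez_def by (simp add: Zset_def)
qed

lemma Ez_mono_AE:
  assumes "\<And>zh. zh \<in> Zset N M \<Longrightarrow> 0 < Pjoint Pb Pt z zh \<Longrightarrow> AE e in \<pi>. f zh e \<le> g zh e"
  shows "Ez N M Pb Pt \<pi> z f \<le> Ez N M Pb Pt \<pi> z g"
  unfolding Ez_def
proof (intro sum_mono)
  fix zh assume "zh \<in> Zset N M"
  with assms[of zh] show "ennreal (Pjoint Pb Pt z zh) * (\<integral>\<^sup>+e. f zh e \<partial>\<pi>)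
      \<le> ennreal (Pjoint Pb Pt z zh) * (\<integral>\<^sup>+e. g zh e \<partial>\<pi>)"
    by (cases "0 < Pjoint Pb Pt z zh")
      (auto intro!: mult_left_mono nn_integral_mono_AE simp: ennreal_neg)
qed

lemma Ez_tendsto:
  assumes "\<And>zh. zh \<in> Zset N M \<Longrightarrow> 0 < Pjoint Pb Pt z zh \<Longrightarrow>
      (\<lambda>n. \<integral>\<^sup>+e. f n zh e \<partial>\<pi>) \<longlonglongrightarrow> (\<integral>\<^sup>+e. g zh e \<partial>\<pi>)"
  shows "(\<lambda>n. Ez N M Pb Pt \<pi> z (f n)) \<longlonglongrightarrow> Ez N M Pb Pt \<pi> z g"
  unfolding Ez_def
proof (intro tendsto_sum)
  fix zh assume "zh \<in> Zset N M"
  with assms[of zh] show "(\<lambda>n. ennreal (Pjoint Pb Pt z zh) * (\<integral>\<^sup>+e. f n zh e \<partial>\<pi>))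
      \<longlonglongrightarrow> ennreal (Pjoint Pb Pt z zh) * (\<integral>\<^sup>+e. g zh e \<partial>\<pi>)"
    by (cases "0 < Pjoint Pb Pt z zh") (auto intro!: tendsto_mult_ennreal simp: ennreal_neg)
qed

locale risk_aversion_shock =
  fixes N M :: nat
    and Pb Pt :: "nat \<Rightarrow> nat \<Rightarrow> real"
    and \<gamma> :: "nat \<Rightarrow> real"
    and \<pi> :: "'e measure"
    and \<beta> R Y :: "nat \<times> nat \<Rightarrow> nat \<times> nat \<Rightarrow> 'e \<Rightarrow> real"
    and c :: "real \<Rightarrow> nat \<times> nat \<Rightarrow> real"
  assumes Pb: "stochastic N Pb" and Pt: "stochastic M Pt"
    and gamma_pos: "0 < \<gamma> 0"
    and gamma_incr: "\<forall>i. i + 1 < N \<longrightarrow> \<gamma> i < \<gamma> (i + 1)"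
    and pi: "prob_space \<pi>"
    and meas: "\<forall>z\<in>Zset N M. \<forall>zh\<in>Zset N M.
        \<beta> z zh \<in> borel_measurable \<pi> \<and> R z zh \<in> borel_measurable \<pi> \<and> Y z zh \<in> borel_measurable \<pi>"
    and nonneg: "\<forall>z zh e. 0 \<le> \<beta> z zh e \<and> 0 \<le> R z zh e \<and> 0 \<le> Y z zh e"
    and A2a2: "\<forall>z\<in>Zset N M. Ez N M Pb Pt \<pi> z
        (\<lambda>zh e. ennreal (\<beta> z zh e * R z zh e) * uprimeE \<gamma> (Y z zh e) zh) < \<infinity>"
    and K_fin: "\<forall>z\<in>Zset N M. \<forall>zh\<in>Zset N M. Kentry Pb Pt \<pi> \<beta> R z zh < \<infinity>"
    and pos_prob: "\<forall>z\<in>Zset N M. \<forall>zh\<in>Zset N M.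
        measure \<pi> {e \<in> space \<pi>. \<beta> z zh e * R z zh e > 0} > 0"
    and cstar_C: "c \<in> candC N M \<gamma>"
    and cstar_fix: "\<forall>w>0. \<forall>z\<in>Zset N M. Top N M Pb Pt \<pi> \<gamma> \<beta> R Y c w z = c w z"
begin

abbreviation states :: "(nat \<times> nat) set" where
  "states \<equiv> Zset N M"

lemma risk_aversion_strict_mono: "k < i \<Longrightarrow> i < N \<Longrightarrow> \<gamma> k < \<gamma> i"
proof (induction i)
  case (Suc i)
  then have "\<gamma> i < \<gamma> (Suc i)" using gamma_incr by simp
  with Suc show ?case by (cases "k = i") auto
qed simp

lemma risk_aversion_pos: "z \<in> states \<Longrightarrow> 0 < \<gamma> (fst z)"
  using gamma_pos risk_aversion_strict_mono[of 0 "fst z"]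
  by (cases "fst z") (auto simp: Zset_def)

lemma uprime_antimono:
  assumes "z \<in> states" "0 < x" "x \<le> y"
  shows "uprime \<gamma> y z \<le> uprime \<gamma> x z"
  unfolding uprime_def using assms risk_aversion_pos[OF assms(1)] by (intro powr_mono2') auto

lemma consumption_pos_le: "0 < w \<Longrightarrow> z \<in> states \<Longrightarrow> 0 < c w z \<and> c w z \<le> w"
  using cstar_C unfolding candC_def by auto

lemma consumption_mono: "0 < x \<Longrightarrow> x \<le> y \<Longrightarrow> z \<in> states \<Longrightarrow> c x z \<le> c y z"
  using cstar_C unfolding candC_def mono_on_def by auto

lemma continuous_on_consumption:
  assumes "z \<in> states"
  shows "continuous_on {0<..} (\<lambda>w. c w z)"
proof -
  have "continuous_on ({0<..} \<times> states) (\<lambda>p. c (fst p) (snd p))"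
    using cstar_C unfolding candC_def by auto
  then have "continuous_on {0<..} ((\<lambda>p. c (fst p) (snd p)) \<circ> (\<lambda>w. (w, z)))"
    using assms by (intro continuous_on_compose continuous_intros) (auto elim: continuous_on_subset)
  then show ?thesis by (simp add: o_def)
qed

lemma uprime_consumption_bounded:
  "\<exists>B\<ge>0. \<forall>w>0. \<forall>z\<in>states. uprime \<gamma> (c w z) z \<le> uprime \<gamma> w z + B"
proof -
  obtain B where "\<forall>w>0. \<forall>z\<in>states. \<bar>uprime \<gamma> (c w z) z - uprime \<gamma> w z\<bar> \<le> B"
    using cstar_C unfolding candC_def by auto
  then have "\<forall>w>0. \<forall>z\<in>states. uprime \<gamma> (c w z) z \<le> uprime \<gamma> w z + max B 0"
    by (smt (verit))
  then show ?thesis by (intro exI[of _ "max B 0"]) simp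
qed

lemma data_nonneg: "0 \<le> \<beta> z zh e" "0 \<le> R z zh e" "0 \<le> Y z zh e"
  using nonneg by blast+

lemma data_measurable:
  assumes "z \<in> states" "zh \<in> states"
  shows "\<beta> z zh \<in> borel_measurable \<pi>" "R z zh \<in> borel_measurable \<pi>" "Y z zh \<in> borel_measurable \<pi>"
  using meas assms by blast+

lemma income_uprime_measurable:
  assumes "z \<in> states" "zh \<in> states"
  shows "(\<lambda>e. ennreal (\<beta> z zh e * R z zh e) * uprimeE \<gamma> (Y z zh e) zh) \<in> borel_measurable \<pi>"
proof -
  note [measurable] = data_measurable[OF assms]
  show ?thesis unfolding uprimeE_def uprime_def by measurable
qed

text \<open>
  Marginal utility at zero consumption is +\<infinity> (uprimeE), so finiteness of E beta R u'(Y)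
  forces Y > 0 wherever beta R > 0. This makes the junk value of c at wealth 0 irrelevant.
\<close>

lemma AE_income_pos:
  assumes z: "z \<in> states" and zh: "zh \<in> states" and P: "0 < Pjoint Pb Pt z zh"
  shows "AE e in \<pi>. 0 < \<beta> z zh e * R z zh e \<longrightarrow> 0 < Y z zh e"
proof -
  have "(\<integral>\<^sup>+e. ennreal (\<beta> z zh e * R z zh e) * uprimeE \<gamma> (Y z zh e) zh \<partial>\<pi>) < \<infinity>"
    using A2a2 z zh P by (intro nn_integral_finite_of_Ez) auto
  then have "AE e in \<pi>. ennreal (\<beta> z zh e * R z zh e) * uprimeE \<gamma> (Y z zh e) zh \<noteq> \<infinity>"
    using income_uprime_measurable[OF z zh] by (intro nn_integral_PInf_AE) auto
  then show ?thesis
    by eventually_elim (auto simp: uprimeE_def ennreal_mult_eq_top_iff split: if_splits)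
qed

definition euler_integrand :: "nat \<times> nat \<Rightarrow> real \<Rightarrow> real \<Rightarrow> nat \<times> nat \<Rightarrow> 'e \<Rightarrow> ennreal" where
  "euler_integrand z w \<xi> zh e = ennreal (\<beta> z zh e * R z zh e) *
     uprimeE \<gamma> (c (R z zh e * (w - \<xi>) + Y z zh e) zh) zh"

definition euler_rhs :: "nat \<times> nat \<Rightarrow> real \<Rightarrow> real \<Rightarrow> ennreal" where
  "euler_rhs z w \<xi> = Ez N M Pb Pt \<pi> z (euler_integrand z w \<xi>)"

lemma Top_eq_THE:
  "Top N M Pb Pt \<pi> \<gamma> \<beta> R Y c w z =
     (THE \<xi>. 0 < \<xi> \<and> \<xi> \<le> w \<and> uprimeE \<gamma> \<xi> z = max (euler_rhs z w \<xi>) (uprimeE \<gamma> w z))"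
  unfolding Top_def euler_rhs_def euler_integrand_def ..

lemma euler_integrand_measurable:
  assumes z: "z \<in> states" and zh: "zh \<in> states" and "\<xi> \<le> w"
  shows "euler_integrand z w \<xi> zh \<in> borel_measurable \<pi>"
proof -
  note [measurable] = data_measurable[OF z zh]
  define c' where "c' x = (if x \<in> {0<..} then c x zh else 0)" for x
  have [measurable]: "c' \<in> borel_measurable borel"
    unfolding c'_def
    by (rule borel_measurable_continuous_on_if) (auto intro: continuous_on_consumption[OF zh])
  define X where "X e = R z zh e * (w - \<xi>) + Y z zh e" for e
  have [measurable]: "X \<in> borel_measurable \<pi>" unfolding X_def by measurable
  have "euler_integrand z w \<xi> zh e = ennreal (\<beta> z zh e * R z zh e) *
      (if 0 < X e then uprimeE \<gamma> (c' (X e)) zh else uprimeE \<gamma> (c 0 zh) zh)" for e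
  proof (cases "0 < X e")
    case False
    moreover have "0 \<le> X e" using data_nonneg \<open>\<xi> \<le> w\<close> by (simp add: X_def)
    ultimately have "X e = 0" by simp
    then show ?thesis by (simp add: euler_integrand_def X_def[symmetric])
  qed (simp add: euler_integrand_def X_def[symmetric] c'_def)
  then have "euler_integrand z w \<xi> zh = (\<lambda>e. ennreal (\<beta> z zh e * R z zh e) *
      (if 0 < X e then uprimeE \<gamma> (c' (X e)) zh else uprimeE \<gamma> (c 0 zh) zh))"
    by blast
  also have "\<dots> \<in> borel_measurable \<pi>"
    unfolding uprimeE_def uprime_def by measurable
  finally show ?thesis .
qed

lemma euler_integrand_le:
  assumes zh: "zh \<in> states" and "\<xi> \<le> w"
    and B: "0 \<le> B" "\<forall>x>0. uprime \<gamma> (c x zh) zh \<le> uprime \<gamma> x zh + B"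
  shows "euler_integrand z w \<xi> zh e \<le>
    ennreal (\<beta> z zh e * R z zh e) * uprimeE \<gamma> (Y z zh e) zh + ennreal (\<beta> z zh e * R z zh e) * ennreal B"
proof (cases "0 < Y z zh e")
  case True
  define X where "X = R z zh e * (w - \<xi>) + Y z zh e"
  have YX: "Y z zh e \<le> X" using data_nonneg \<open>\<xi> \<le> w\<close> by (simp add: X_def)
  with True have X: "0 < X" by simp
  have "uprime \<gamma> (c X zh) zh \<le> uprime \<gamma> (Y z zh e) zh + B"
    using B(2) X uprime_antimono[OF zh True YX] by fastforce
  then have "uprimeE \<gamma> (c X zh) zh \<le> uprimeE \<gamma> (Y z zh e) zh + ennreal B"
    using True consumption_pos_le[OF X zh] B(1)
    by (simp add: uprimeE_def uprime_def ennreal_plus[symmetric] del: ennreal_plus)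
  then show ?thesis
    unfolding euler_integrand_def X_def[symmetric] distrib_left[symmetric] by (rule mult_left_mono) simp
next
  case False
  then show ?thesis
    by (cases "0 < \<beta> z zh e * R z zh e")
      (auto simp: euler_integrand_def uprimeE_def ennreal_mult_top ennreal_neg)
qed

lemma euler_integrand_dominated:
  assumes z: "z \<in> states" and zh: "zh \<in> states" and P: "0 < Pjoint Pb Pt z zh"
  obtains h where "h \<in> borel_measurable \<pi>" "(\<integral>\<^sup>+e. h e \<partial>\<pi>) < \<infinity>"
    "\<And>w \<xi> e. \<xi> \<le> w \<Longrightarrow> euler_integrand z w \<xi> zh e \<le> h e"
proof -
  note [measurable] = data_measurable[OF z zh] income_uprime_measurable[OF z zh]
  obtain B where B: "0 \<le> B" "\<forall>x>0. uprime \<gamma> (c x zh) zh \<le> uprime \<gamma> x zh + B"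
    using uprime_consumption_bounded zh by blast
  define h where "h e = ennreal (\<beta> z zh e * R z zh e) * uprimeE \<gamma> (Y z zh e) zh
    + ennreal (\<beta> z zh e * R z zh e) * ennreal B" for e
  have "(\<integral>\<^sup>+e. ennreal (\<beta> z zh e * R z zh e) * uprimeE \<gamma> (Y z zh e) zh \<partial>\<pi>) < \<infinity>"
    using A2a2 z zh P by (intro nn_integral_finite_of_Ez) auto
  moreover have "(\<integral>\<^sup>+e. ennreal (\<beta> z zh e * R z zh e) \<partial>\<pi>) < \<infinity>"
  proof -
    have "Kentry Pb Pt \<pi> \<beta> R z zh < \<infinity>" using K_fin z zh by blast
    with P show ?thesis by (auto simp: Kentry_def ennreal_mult_less_top)
  qed
  ultimately have "(\<integral>\<^sup>+e. h e \<partial>\<pi>) < \<infinity>"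
    unfolding h_def by (simp add: nn_integral_add nn_integral_multc ennreal_mult_less_top)
  moreover have "h \<in> borel_measurable \<pi>" unfolding h_def by measurable
  ultimately show ?thesis
    using that euler_integrand_le[OF zh _ B] unfolding h_def by blast
qed

lemma euler_rhs_finite:
  assumes z: "z \<in> states" and "\<xi> \<le> w"
  shows "euler_rhs z w \<xi> < \<infinity>"
  unfolding euler_rhs_def
proof (rule Ez_finite)
  fix zh assume zh: "zh \<in> states" and P: "0 < Pjoint Pb Pt z zh"
  obtain h where h: "(\<integral>\<^sup>+e. h e \<partial>\<pi>) < \<infinity>" "\<And>e. euler_integrand z w \<xi> zh e \<le> h e"
    using euler_integrand_dominated[OF z zh P] \<open>\<xi> \<le> w\<close> by metis
  have "(\<integral>\<^sup>+e. euler_integrand z w \<xi> zh e \<partial>\<pi>) \<le> (\<integral>\<^sup>+e. h e \<partial>\<pi>)"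
    by (rule nn_integral_mono) (rule h(2))
  also have "\<dots> < \<infinity>" by (rule h(1))
  finally show "(\<integral>\<^sup>+e. euler_integrand z w \<xi> zh e \<partial>\<pi>) < \<infinity>" .
qed

lemma euler_integrand_mono:
  assumes zh: "zh \<in> states" and "\<xi>1 \<le> \<xi>2" "\<xi>2 \<le> w"
    and income: "0 < \<beta> z zh e * R z zh e \<longrightarrow> 0 < Y z zh e"
  shows "euler_integrand z w \<xi>1 zh e \<le> euler_integrand z w \<xi>2 zh e"
proof (cases "0 < \<beta> z zh e * R z zh e")
  case True
  define X1 where "X1 = R z zh e * (w - \<xi>1) + Y z zh e"
  define X2 where "X2 = R z zh e * (w - \<xi>2) + Y z zh e"
  have X2: "0 < X2" using data_nonneg assms True by (simp add: X2_def add_nonneg_pos)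
  have "X2 \<le> X1" using data_nonneg assms by (simp add: X1_def X2_def mult_left_mono)
  then have "c X2 zh \<le> c X1 zh" by (rule consumption_mono[OF X2 _ zh])
  moreover have "0 < c X2 zh" using consumption_pos_le[OF X2 zh] by simp
  ultimately have "uprimeE \<gamma> (c X1 zh) zh \<le> uprimeE \<gamma> (c X2 zh) zh"
    using uprime_antimono[OF zh] by (simp add: uprimeE_def uprime_def)
  then show ?thesis
    unfolding euler_integrand_def X1_def[symmetric] X2_def[symmetric] by (rule mult_left_mono) simp
qed (use data_nonneg in \<open>simp add: euler_integrand_def ennreal_neg\<close>)

lemma euler_rhs_mono:
  assumes z: "z \<in> states" and "\<xi>1 \<le> \<xi>2" "\<xi>2 \<le> w"
  shows "euler_rhs z w \<xi>1 \<le> euler_rhs z w \<xi>2"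
  unfolding euler_rhs_def
proof (rule Ez_mono_AE)
  fix zh assume zh: "zh \<in> states" and P: "0 < Pjoint Pb Pt z zh"
  show "AE e in \<pi>. euler_integrand z w \<xi>1 zh e \<le> euler_integrand z w \<xi>2 zh e"
    using AE_income_pos[OF z zh P]
    by eventually_elim (rule euler_integrand_mono[OF zh assms(2,3)])
qed

lemma euler_integrand_tendsto:
  assumes zh: "zh \<in> states" and s: "\<forall>n. s n \<le> w" "s \<longlonglongrightarrow> \<xi>" "\<xi> \<le> w"
    and income: "0 < \<beta> z zh e * R z zh e \<longrightarrow> 0 < Y z zh e"
  shows "(\<lambda>n. euler_integrand z w (s n) zh e) \<longlonglongrightarrow> euler_integrand z w \<xi> zh e"
proof (cases "0 < \<beta> z zh e * R z zh e")
  case True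
  define X where "X \<eta> = R z zh e * (w - \<eta>) + Y z zh e" for \<eta>
  have X_pos: "0 < X \<eta>" if "\<eta> \<le> w" for \<eta>
    using data_nonneg that income True by (simp add: X_def add_nonneg_pos)
  have "(\<lambda>n. X (s n)) \<longlonglongrightarrow> X \<xi>" unfolding X_def by (intro tendsto_intros s)
  then have "(\<lambda>n. c (X (s n)) zh) \<longlonglongrightarrow> c (X \<xi>) zh"
    using X_pos s by (intro continuous_on_tendsto_compose[OF continuous_on_consumption[OF zh]]) auto
  then have "(\<lambda>n. \<beta> z zh e * R z zh e * c (X (s n)) zh powr - \<gamma> (fst zh))
      \<longlonglongrightarrow> \<beta> z zh e * R z zh e * c (X \<xi>) zh powr - \<gamma> (fst zh)"
    using consumption_pos_le[OF X_pos[OF s(3)] zh] by (intro tendsto_intros) auto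
  then have "(\<lambda>n. ennreal (\<beta> z zh e * R z zh e * c (X (s n)) zh powr - \<gamma> (fst zh)))
      \<longlonglongrightarrow> ennreal (\<beta> z zh e * R z zh e * c (X \<xi>) zh powr - \<gamma> (fst zh))"
    by (rule tendsto_ennrealI)
  moreover have "euler_integrand z w \<eta> zh e
      = ennreal (\<beta> z zh e * R z zh e * c (X \<eta>) zh powr - \<gamma> (fst zh))" if "\<eta> \<le> w" for \<eta>
    using consumption_pos_le[OF X_pos[OF that] zh] data_nonneg
    by (simp add: euler_integrand_def X_def uprimeE_pos ennreal_mult')
  ultimately show ?thesis using s by simp
qed (use data_nonneg in \<open>simp add: euler_integrand_def ennreal_neg\<close>)

lemma euler_rhs_tendsto:
  assumes z: "z \<in> states" and s: "\<forall>n. s n \<le> w" "s \<longlonglongrightarrow> \<xi>" "\<xi> \<le> w"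
  shows "(\<lambda>n. euler_rhs z w (s n)) \<longlonglongrightarrow> euler_rhs z w \<xi>"
  unfolding euler_rhs_def
proof (rule Ez_tendsto)
  fix zh assume zh: "zh \<in> states" and P: "0 < Pjoint Pb Pt z zh"
  obtain h where [measurable]: "h \<in> borel_measurable \<pi>"
    and "(\<integral>\<^sup>+e. h e \<partial>\<pi>) < \<infinity>" "\<And>w \<xi> e. \<xi> \<le> w \<Longrightarrow> euler_integrand z w \<xi> zh e \<le> h e"
    using euler_integrand_dominated[OF z zh P] by metis
  moreover have "AE e in \<pi>. (\<lambda>n. euler_integrand z w (s n) zh e) \<longlonglongrightarrow> euler_integrand z w \<xi> zh e"
    using AE_income_pos[OF z zh P] by eventually_elim (rule euler_integrand_tendsto[OF zh s])
  ultimately show "(\<lambda>n. \<integral>\<^sup>+e. euler_integrand z w (s n) zh e \<partial>\<pi>)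
      \<longlonglongrightarrow> (\<integral>\<^sup>+e. euler_integrand z w \<xi> zh e \<partial>\<pi>)"
    using s euler_integrand_measurable[OF z zh]
    by (intro nn_integral_dominated_convergence[where w = h]) auto
qed

text \<open>
  Top is a definite description, so the fixed-point equation tells us something about c w z
  only after the defining equation is shown to have exactly one root.
\<close>

lemma consumption_euler_inequality:
  assumes z: "z \<in> states" and w: "0 < w"
  shows "euler_rhs z w (c w z) \<le> uprimeE \<gamma> (c w z) z"
proof -
  define g where "g = \<gamma> (fst z)"
  define f where "f \<xi> = enn2real (euler_rhs z w \<xi>)" for \<xi>
  have rhs_eq: "euler_rhs z w \<xi> = ennreal (f \<xi>)" if "\<xi> \<le> w" for \<xi>
    using euler_rhs_finite[OF z that] by (simp add: f_def)
  have "continuous_on {0<..w} f"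
  proof (rule continuous_on_sequentiallyI)
    fix s \<xi> assume "\<forall>n. s n \<in> {0<..w}" "\<xi> \<in> {0<..w}" "s \<longlonglongrightarrow> \<xi>"
    then have "(\<lambda>n. euler_rhs z w (s n)) \<longlonglongrightarrow> euler_rhs z w \<xi>"
      by (intro euler_rhs_tendsto[OF z]) auto
    then show "(\<lambda>n. f (s n)) \<longlonglongrightarrow> f \<xi>"
      unfolding f_def using euler_rhs_finite[OF z] \<open>\<xi> \<in> {0<..w}\<close>
      by (intro tendsto_enn2real) auto
  qed
  moreover have "mono_on {0<..w} f"
    using euler_rhs_finite[OF z] unfolding infinity_ennreal_def
    by (intro mono_onI) (auto simp: f_def intro!: enn2real_mono euler_rhs_mono[OF z])
  ultimately have ex1: "\<exists>!\<xi>. 0 < \<xi> \<and> \<xi> \<le> w \<and> \<xi> powr -g = max (f \<xi>) (w powr -g)"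
    using risk_aversion_pos[OF z] w by (intro ex1_powr_eq_max) (auto simp: g_def)
  define euler_eq where "euler_eq \<xi> \<longleftrightarrow>
    0 < \<xi> \<and> \<xi> \<le> w \<and> uprimeE \<gamma> \<xi> z = max (euler_rhs z w \<xi>) (uprimeE \<gamma> w z)" for \<xi>
  have "euler_eq \<xi> \<longleftrightarrow> 0 < \<xi> \<and> \<xi> \<le> w \<and> \<xi> powr -g = max (f \<xi>) (w powr -g)" for \<xi>
  proof (cases "0 < \<xi> \<and> \<xi> \<le> w")
    case True
    have "mono ennreal" by (rule monoI) (rule ennreal_leI)
    then have "max (euler_rhs z w \<xi>) (uprimeE \<gamma> w z) = ennreal (max (f \<xi>) (w powr -g))"
      using rhs_eq True w by (simp add: uprimeE_pos g_def max_of_mono)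
    then show ?thesis using True by (simp add: euler_eq_def uprimeE_pos g_def f_def le_max_iff_disj)
  qed (auto simp: euler_eq_def)
  with ex1 have "\<exists>!\<xi>. euler_eq \<xi>" by simp
  moreover have "c w z = (THE \<xi>. euler_eq \<xi>)"
    using cstar_fix z w by (simp add: Top_eq_THE euler_eq_def)
  ultimately have "euler_eq (c w z)" by (simp add: theI')
  then show ?thesis by (simp add: euler_eq_def)
qed

lemma euler_integrand_lower_bound:
  assumes zh: "zh \<in> states" and w: "1 \<le> w" and \<xi>: "0 \<le> \<xi>" "\<xi> \<le> w" and Y: "0 < Y z zh e"
    and a: "1 \<le> a * (\<beta> z zh e * R z zh e)" "R z zh e \<le> a" "Y z zh e \<le> a"
  shows "ennreal ((2 * a * w) powr - \<gamma> (fst zh) / a) \<le> euler_integrand z w \<xi> zh e"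
proof -
  define g where "g = \<gamma> (fst zh)"
  define X where "X = R z zh e * (w - \<xi>) + Y z zh e"
  have g: "0 < g" using risk_aversion_pos[OF zh] by (simp add: g_def)
  have a_pos: "0 < a" using Y a(3) by simp
  have X: "0 < X" using data_nonneg \<xi> Y by (simp add: X_def add_nonneg_pos)
  have "R z zh e * (w - \<xi>) \<le> a * w"
    using data_nonneg a(2) a_pos \<xi> w by (intro mult_mono) auto
  moreover have "a \<le> a * w" using a_pos w by simp
  ultimately have "X \<le> 2 * a * w" using a(3) unfolding X_def by linarith
  then have "(2 * a * w) powr -g \<le> X powr -g" using g X by (intro powr_mono2') auto
  also have "\<dots> \<le> c X zh powr -g" using g consumption_pos_le[OF X zh] by (intro powr_mono2') auto
  finally have "(2 * a * w) powr -g \<le> c X zh powr -g" .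
  moreover have "1 / a \<le> \<beta> z zh e * R z zh e" using a(1) a_pos by (simp add: divide_le_eq mult.commute)
  ultimately have "1 / a * (2 * a * w) powr -g \<le> \<beta> z zh e * R z zh e * c X zh powr -g"
    using a_pos data_nonneg by (intro mult_mono) auto
  then show ?thesis
    using consumption_pos_le[OF X zh] data_nonneg
    by (simp add: euler_integrand_def X_def g_def uprimeE_pos ennreal_mult'[symmetric] ennreal_leI)
qed

definition bounded_return_event :: "nat \<times> nat \<Rightarrow> nat \<times> nat \<Rightarrow> real \<Rightarrow> 'e set" where
  "bounded_return_event z zh a =
     {e \<in> space \<pi>. 1 \<le> a * (\<beta> z zh e * R z zh e) \<and> max (R z zh e) (Y z zh e) \<le> a}"

lemma bounded_return_event_sets:
  "z \<in> states \<Longrightarrow> zh \<in> states \<Longrightarrow> bounded_return_event z zh a \<in> sets \<pi>"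
  using data_measurable[of z zh] unfolding bounded_return_event_def by measurable

lemma bounded_return_event_pos:
  assumes z: "z \<in> states" and zh: "zh \<in> states"
  obtains a where "0 < a" "0 < measure \<pi> (bounded_return_event z zh a)"
proof -
  interpret prob_space \<pi> by (rule pi)
  note [measurable] = data_measurable[OF z zh]
  have "0 < emeasure \<pi> {e \<in> space \<pi>. 0 < \<beta> z zh e * R z zh e}"
    using pos_prob z zh by (simp add: emeasure_eq_measure)
  then show ?thesis
    using emeasure_pos_truncation[of "\<lambda>e. \<beta> z zh e * R z zh e" \<pi> "\<lambda>e. max (R z zh e) (Y z zh e)"] that
    by (auto simp: bounded_return_event_def emeasure_eq_measure)
qed

lemma AE_euler_integrand_ge_indicator:
  assumes z: "z \<in> states" and zh: "zh \<in> states" and P: "0 < Pjoint Pb Pt z zh"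
    and w: "1 \<le> w" and \<xi>: "0 \<le> \<xi>" "\<xi> \<le> w"
  shows "AE e in \<pi>. ennreal ((2 * a * w) powr - \<gamma> (fst zh) / a) * indicator (bounded_return_event z zh a) e
    \<le> euler_integrand z w \<xi> zh e"
  using AE_income_pos[OF z zh P]
proof eventually_elim
  case (elim e)
  show ?case
  proof (cases "e \<in> bounded_return_event z zh a")
    case True
    then have bound: "1 \<le> a * (\<beta> z zh e * R z zh e)" "R z zh e \<le> a" "Y z zh e \<le> a"
      by (auto simp: bounded_return_event_def)
    then have "\<beta> z zh e * R z zh e \<noteq> 0" by auto
    with elim data_nonneg have "0 < Y z zh e" by (simp add: less_le)
    with True show ?thesis using euler_integrand_lower_bound[OF zh w \<xi> _ bound] by simp
  qed simp
qed

lemma euler_rhs_lower_bound: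
  assumes z: "z \<in> states" and zh: "zh \<in> states" and P: "0 < Pjoint Pb Pt z zh"
  obtains K where "0 < K"
    "\<And>w \<xi>. 1 \<le> w \<Longrightarrow> 0 \<le> \<xi> \<Longrightarrow> \<xi> \<le> w \<Longrightarrow> ennreal (K * w powr - \<gamma> (fst zh)) \<le> euler_rhs z w \<xi>"
proof -
  interpret prob_space \<pi> by (rule pi)
  obtain a where a: "0 < a" and m: "0 < measure \<pi> (bounded_return_event z zh a)"
    using bounded_return_event_pos[OF z zh] by blast
  define S where "S = bounded_return_event z zh a"
  define m where "m = measure \<pi> S"
  define g where "g = \<gamma> (fst zh)"
  define K where "K = Pjoint Pb Pt z zh * m * (2 * a) powr -g / a"
  have "0 < K" using P m a by (simp add: K_def m_def S_def)
  moreover have "ennreal (K * w powr -g) \<le> euler_rhs z w \<xi>" if w: "1 \<le> w" and \<xi>: "0 \<le> \<xi>" "\<xi> \<le> w" for w \<xi>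
  proof -
    define q where "q = (2 * a * w) powr -g / a"
    have "(\<integral>\<^sup>+e. ennreal q * indicator S e \<partial>\<pi>) \<le> (\<integral>\<^sup>+e. euler_integrand z w \<xi> zh e \<partial>\<pi>)"
      using AE_euler_integrand_ge_indicator[OF z zh P w \<xi>]
      by (intro nn_integral_mono_AE) (simp add: q_def g_def S_def)
    then have "ennreal q * ennreal m \<le> (\<integral>\<^sup>+e. euler_integrand z w \<xi> zh e \<partial>\<pi>)"
      using bounded_return_event_sets[OF z zh]
      by (simp add: nn_integral_cmult_indicator emeasure_eq_measure S_def m_def)
    then have "ennreal (Pjoint Pb Pt z zh) * (ennreal q * ennreal m)
        \<le> ennreal (Pjoint Pb Pt z zh) * (\<integral>\<^sup>+e. euler_integrand z w \<xi> zh e \<partial>\<pi>)"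
      by (rule mult_left_mono) simp
    also have "\<dots> \<le> euler_rhs z w \<xi>" unfolding euler_rhs_def by (rule Ez_term_le[OF zh])
    finally show ?thesis
      using P m a w by (simp add: K_def q_def m_def S_def powr_mult ennreal_mult[symmetric] mult_ac)
  qed
  ultimately show ?thesis using that by (simp add: g_def)
qed

lemma no_transition_to_lower_risk_aversion:
  assumes i: "i < N" and j: "j < M" and L: "0 < L"
    and lim: "((\<lambda>w. c w (i, j) / w) \<longlongrightarrow> L) at_top" and k: "k < i"
  shows "Pb i k = 0"
proof (rule ccontr)
  assume "Pb i k \<noteq> 0"
  moreover have "0 \<le> Pb i k" using Pb i k by (simp add: stochastic_def)
  ultimately have "0 < Pb i k" by simp
  obtain j' where j': "j' < M" "0 < Pt j j'" using stochastic_row_pos[OF Pt j] by blast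
  have z: "(i, j) \<in> states" and zh: "(k, j') \<in> states" using i j j' k by (auto simp: Zset_def)
  have "0 < Pjoint Pb Pt (i, j) (k, j')" using \<open>0 < Pb i k\<close> j' by (simp add: Pjoint_def)
  then obtain K where K: "0 < K" and lower: "\<And>w \<xi>. 1 \<le> w \<Longrightarrow> 0 \<le> \<xi> \<Longrightarrow> \<xi> \<le> w \<Longrightarrow>
      ennreal (K * w powr - \<gamma> k) \<le> euler_rhs (i, j) w \<xi>"
    using euler_rhs_lower_bound[OF z zh] by auto
  have "0 < \<gamma> k" "\<gamma> k < \<gamma> i"
    using risk_aversion_pos[OF zh] risk_aversion_strict_mono[OF k i] by auto
  then have "\<forall>\<^sub>F w in at_top. (L / 2 * w) powr - \<gamma> i < K * w powr - \<gamma> k"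
    using K L by real_asymp
  moreover have "\<forall>\<^sub>F w in at_top. L / 2 < c w (i, j) / w"
    using lim L by (intro order_tendstoD) auto
  moreover have "\<forall>\<^sub>F w in at_top. (1::real) \<le> w" by (rule eventually_ge_at_top)
  ultimately have "\<forall>\<^sub>F w :: real in at_top. False"
  proof eventually_elim
    case (elim w)
    then have cw: "L / 2 * w < c w (i, j)" by (simp add: field_simps)
    have "0 < c w (i, j)" "c w (i, j) \<le> w" using consumption_pos_le[OF _ z] elim by auto
    then have "ennreal (K * w powr - \<gamma> k) \<le> euler_rhs (i, j) w (c w (i, j))"
      using lower elim by simp
    also have "\<dots> \<le> uprimeE \<gamma> (c w (i, j)) (i, j)"
      using elim by (intro consumption_euler_inequality[OF z]) auto
    also have "\<dots> = ennreal (c w (i, j) powr - \<gamma> i)"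
      using \<open>0 < c w (i, j)\<close> by (simp add: uprimeE_pos)
    finally have "K * w powr - \<gamma> k \<le> c w (i, j) powr - \<gamma> i" by simp
    also have "\<dots> \<le> (L / 2 * w) powr - \<gamma> i"
      using cw L elim \<open>0 < \<gamma> k\<close> \<open>\<gamma> k < \<gamma> i\<close> by (intro powr_mono2') auto
    finally show False using elim by simp
  qed
  then show False by simp
qed

end

theorem proposition3p1:
  fixes N M :: nat
    and Pb Pt :: "nat \<Rightarrow> nat \<Rightarrow> real"
    and \<gamma> :: "nat \<Rightarrow> real"
    and \<pi> :: "'e measure"
    and \<beta> R Y :: "nat \<times> nat \<Rightarrow> nat \<times> nat \<Rightarrow> 'e \<Rightarrow> real"
    and cstar :: "real \<Rightarrow> nat \<times> nat \<Rightarrow> real"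
  assumes NM: "N \<ge> 1" "M \<ge> 1"
    and Pb: "stochastic N Pb" and Pt: "stochastic M Pt"
    and gamma_pos: "0 < \<gamma> 0"
    and gamma_incr: "\<forall>i. i + 1 < N \<longrightarrow> \<gamma> i < \<gamma> (i + 1)"
    and pi: "prob_space \<pi>"
    and meas: "\<forall>z\<in>Zset N M. \<forall>zh\<in>Zset N M.
        \<beta> z zh \<in> borel_measurable \<pi> \<and> R z zh \<in> borel_measurable \<pi> \<and> Y z zh \<in> borel_measurable \<pi>"
    and nonneg: "\<forall>z zh e. 0 \<le> \<beta> z zh e \<and> 0 \<le> R z zh e \<and> 0 \<le> Y z zh e"
    and A2a1: "\<forall>z\<in>Zset N M. Ez N M Pb Pt \<pi> z (\<lambda>zh e. uprimeE \<gamma> (Y z zh e) zh) < \<infinity>"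
    and A2a2: "\<forall>z\<in>Zset N M. Ez N M Pb Pt \<pi> z
        (\<lambda>zh e. ennreal (\<beta> z zh e * R z zh e) * uprimeE \<gamma> (Y z zh e) zh) < \<infinity>"
    and K_fin: "\<forall>z\<in>Zset N M. \<forall>zh\<in>Zset N M. Kentry Pb Pt \<pi> \<beta> R z zh < \<infinity>"
    and A2b: "spectral_radius (Kmat N M Pb Pt \<pi> \<beta> R) < 1"
    and pos_prob: "\<forall>z\<in>Zset N M. \<forall>zh\<in>Zset N M.
        measure \<pi> {e \<in> space \<pi>. \<beta> z zh e * R z zh e > 0} > 0"
    and cstar_C: "cstar \<in> candC N M \<gamma>"
    and cstar_fix: "\<forall>w>0. \<forall>z\<in>Zset N M. Top N M Pb Pt \<pi> \<gamma> \<beta> R Y cstar w z = cstar w z"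
  shows "(\<forall>i<N. \<forall>j<M. (\<exists>L>0. ((\<lambda>w. cstar w (i, j) / w) \<longlongrightarrow> L) at_top)
            \<longrightarrow> (\<forall>k<i. Pb i k = 0))
       \<and> ((\<forall>i. 0 < i \<and> i < N \<longrightarrow> (\<exists>j<M. \<exists>L>0. ((\<lambda>w. cstar w (i, j) / w) \<longlongrightarrow> L) at_top))
            \<longrightarrow> (\<forall>i<N. \<forall>k<i. Pb i k = 0))"
proof -
  interpret risk_aversion_shock N M Pb Pt \<gamma> \<pi> \<beta> R Y cstar
    by (rule risk_aversion_shock.intro)
      (fact Pb Pt gamma_pos gamma_incr pi meas nonneg A2a2 K_fin pos_prob cstar_C cstar_fix)+
  have row_upper: "\<forall>k<i. Pb i k = 0"
    if "i < N" "j < M" "\<exists>L>0. ((\<lambda>w. cstar w (i, j) / w) \<longlongrightarrow> L) at_top" for i j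
    using that no_transition_to_lower_risk_aversion by blast
  moreover have "\<forall>i<N. \<forall>k<i. Pb i k = 0"
    if "\<forall>i. 0 < i \<and> i < N \<longrightarrow> (\<exists>j<M. \<exists>L>0. ((\<lambda>w. cstar w (i, j) / w) \<longlongrightarrow> L) at_top)"
    using that row_upper by (metis gr_zeroI less_nat_zero_code)
  ultimately show ?thesis by blast
qed

end
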